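(* $\mathrm D(\log a)\cap\ell^2_{\rm fin}=\{0\}$ and $\mathrm D(\log a^* )=\{0\}$. In particular the phase operator $\rho=-\frac i2(\log a-\log a^* )$, defined on $\mathrm D(\log a)\cap \mathrm D(\log a^* )$, has $\mathrm D(\rho)=\{0\}$.
   Context: $\ell^2=\ell^2(\mathbb N)$, $\mathbb N=\{0,1,2,\dots\}$, with orthonormal basis $(\xi_n)$; $\ell^2_{\rm fin}$ is the set of finite linear combinations of the $\xi_n$. The annihilation operator $a$ is the closed operator with $a\xi_n=\sqrt n\,\xi_{n-1}$ ($a\xi_0=0$) and domain $\{\sum c_n\xi_n:\sum n|c_n|^2<\infty\}$; $a^*$ is its adjoint, $a^*\xi_n=\sqrt{n+1}\,\xi_{n+1}$. For a linear operator $A$, $\log A$ is defined by $\mathrm D(\log A)=\{f\in\bigcap_{k\ge0}\mathrm D(A^k):\lim_{K\to\infty}\sum_{k=1}^K\frac1k(\mathbf 1-A)^kf\text{ exists}\}$ and $\log Af=-\sum_{k=1}^\infty\frac1k(\mathbf 1-A)^kf$. *)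

theory Defs
  imports "HOL-Analysis.Analysis"
begin

text \<open>Vectors of the Hilbert space l2(N) are represented by their coefficient
  sequences c with respect to the orthonormal basis (xi_n), i.e. f = sum c_n xi_n.\<close>

type_synonym seq = "nat \<Rightarrow> complex"

definition ell2 :: "seq set" where
  "ell2 = {f. summable (\<lambda>n. (cmod (f n))\<^sup>2)}"

definition l2norm :: "seq \<Rightarrow> real" where
  "l2norm f = sqrt (\<Sum>n. (cmod (f n))\<^sup>2)"

definition ell2_fin :: "seq set" where
  "ell2_fin = {f. finite {n. f n \<noteq> 0}}"

text \<open>annihilation operator: a xi_n = sqrt n xi_(n-1), i.e. (a c)_n = sqrt(n+1) c_(n+1)\<close>
definition ann :: "seq \<Rightarrow> seq" where
  "ann f = (\<lambda>n. complex_of_real (sqrt (real (Suc n))) * f (Suc n))"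

definition ann_dom :: "seq set" where
  "ann_dom = {f \<in> ell2. summable (\<lambda>n. real n * (cmod (f n))\<^sup>2)}"

text \<open>creation operator (adjoint of a): a* xi_n = sqrt(n+1) xi_(n+1),
  i.e. (a* c)_n = sqrt n c_(n-1); its domain is the same as that of a.\<close>
definition cre :: "seq \<Rightarrow> seq" where
  "cre f = (\<lambda>n. if n = 0 then 0 else complex_of_real (sqrt (real n)) * f (n - 1))"

definition cre_dom :: "seq set" where
  "cre_dom = {f \<in> ell2. summable (\<lambda>n. real (Suc n) * (cmod (f n))\<^sup>2)}"

primrec pow_dom :: "seq set \<Rightarrow> (seq \<Rightarrow> seq) \<Rightarrow> nat \<Rightarrow> seq set" where
  "pow_dom D T 0 = ell2"
| "pow_dom D T (Suc k) = {f \<in> D. T f \<in> pow_dom D T k}"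

definition one_minus_pow :: "(seq \<Rightarrow> seq) \<Rightarrow> nat \<Rightarrow> seq \<Rightarrow> seq" where
  "one_minus_pow T k f = ((\<lambda>g. (\<lambda>n. g n - T g n)) ^^ k) f"

definition log_partial :: "(seq \<Rightarrow> seq) \<Rightarrow> seq \<Rightarrow> nat \<Rightarrow> seq" where
  "log_partial T f K = (\<lambda>n. \<Sum>k = 1..K. (1 / of_nat k) * one_minus_pow T k f n)"

definition log_dom :: "seq set \<Rightarrow> (seq \<Rightarrow> seq) \<Rightarrow> seq set" where
  "log_dom D T = {f \<in> (\<Inter>k. pow_dom D T k).
      \<exists>g \<in> ell2. (\<lambda>K. l2norm (\<lambda>n. log_partial T f K n - g n)) \<longlonglongrightarrow> 0}"

definition phase_dom :: "seq set" where
  "phase_dom = log_dom ann_dom ann \<inter> log_dom cre_dom cre"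

end

theory Submission
  imports Defs
begin

text \<open>If some coefficient of \<open>(1 - A)\<^sup>k f\<close> does not depend on \<open>k\<close>, say it equals \<open>c\<close>, then
  the same coefficient of the \<open>K\<close>-th partial sum of the logarithm series is \<open>c H\<^sub>K\<close> with
  \<open>H\<^sub>K\<close> the harmonic numbers; since \<open>\<ell>\<^sup>2\<close>-convergence implies coefficientwise convergence,
  \<open>c = 0\<close>. The annihilation operator lowers indices, so the top coefficient of a finitely
  supported \<open>f\<close> is stable; the creation operator raises them, so the lowest nonzero
  coefficient of any \<open>f\<close> is stable.\<close>

lemma square_sum_le: "(a + b :: real)\<^sup>2 \<le> 2 * a\<^sup>2 + 2 * b\<^sup>2"
  using zero_le_power2[of "a - b"] by (simp add: power2_diff power2_sum)

lemma summable_weighted_norm_diff: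
  fixes f g :: seq
  assumes w: "\<And>n. w n \<ge> (0::real)"
    and sf: "summable (\<lambda>n. w n * (cmod (f n))\<^sup>2)"
    and sg: "summable (\<lambda>n. w n * (cmod (g n))\<^sup>2)"
  shows "summable (\<lambda>n. w n * (cmod (f n - g n))\<^sup>2)"
proof (rule summable_comparison_test')
  show "summable (\<lambda>n. 2 * (w n * (cmod (f n))\<^sup>2) + 2 * (w n * (cmod (g n))\<^sup>2))"
    using sf sg by (intro summable_add summable_mult) auto
  fix n
  have "(cmod (f n - g n))\<^sup>2 \<le> (cmod (f n) + cmod (g n))\<^sup>2"
    using norm_triangle_ineq4 by (intro power_mono) auto
  also have "\<dots> \<le> 2 * (cmod (f n))\<^sup>2 + 2 * (cmod (g n))\<^sup>2"
    by (rule square_sum_le)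
  finally have "w n * (cmod (f n - g n))\<^sup>2 \<le> w n * (2 * (cmod (f n))\<^sup>2 + 2 * (cmod (g n))\<^sup>2)"
    using w by (rule mult_left_mono)
  then show "norm (w n * (cmod (f n - g n))\<^sup>2)
      \<le> 2 * (w n * (cmod (f n))\<^sup>2) + 2 * (w n * (cmod (g n))\<^sup>2)"
    using w[of n] by (simp add: algebra_simps)
qed

lemma ell2_diff: "f \<in> ell2 \<Longrightarrow> g \<in> ell2 \<Longrightarrow> (\<lambda>n. f n - g n) \<in> ell2"
  using summable_weighted_norm_diff[of "\<lambda>_. 1" f g] by (simp add: ell2_def)

lemma ell2_zero: "(\<lambda>n. 0) \<in> ell2"
  by (simp add: ell2_def)

lemma ell2_scale: "f \<in> ell2 \<Longrightarrow> (\<lambda>n. c * f n) \<in> ell2"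
  unfolding ell2_def by (simp add: norm_mult power_mult_distrib summable_mult)

lemma ell2_add: "f \<in> ell2 \<Longrightarrow> g \<in> ell2 \<Longrightarrow> (\<lambda>n. f n + g n) \<in> ell2"
  using ell2_diff[of f "\<lambda>n. - g n"] ell2_scale[of g "-1"] by simp

lemma norm_le_l2norm:
  assumes "h \<in> ell2"
  shows "cmod (h n) \<le> l2norm h"
proof -
  have "(\<Sum>m\<in>{n}. (cmod (h m))\<^sup>2) \<le> (\<Sum>m. (cmod (h m))\<^sup>2)"
    using assms unfolding ell2_def by (intro sum_le_suminf) auto
  then show ?thesis
    unfolding l2norm_def by (simp add: real_le_rsqrt)
qed

lemma one_minus_pow_Suc:
  "one_minus_pow T (Suc k) f = (\<lambda>n. one_minus_pow T k f n - T (one_minus_pow T k f) n)"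
  by (simp add: one_minus_pow_def)

locale diff_preserving_operator =
  fixes D :: "seq set" and T :: "seq \<Rightarrow> seq"
  assumes T_diff: "T (\<lambda>n. f n - g n) = (\<lambda>n. T f n - T g n)"
    and D_diff: "f \<in> D \<Longrightarrow> g \<in> D \<Longrightarrow> (\<lambda>n. f n - g n) \<in> D"
    and zero_in_D: "(\<lambda>n. 0) \<in> D"
begin

lemma T_zero: "T (\<lambda>n. 0) = (\<lambda>n. 0)"
  using T_diff[of "\<lambda>n. 0" "\<lambda>n. 0"] by simp

lemma pow_dom_diff:
  "f \<in> pow_dom D T k \<Longrightarrow> g \<in> pow_dom D T k \<Longrightarrow> (\<lambda>n. f n - g n) \<in> pow_dom D T k"
  by (induction k arbitrary: f g) (simp_all add: ell2_diff D_diff T_diff)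

lemma one_minus_pow_in_pow_dom:
  assumes "f \<in> (\<Inter>k. pow_dom D T k)"
  shows "one_minus_pow T j f \<in> (\<Inter>k. pow_dom D T k)"
proof (induction j)
  case 0
  then show ?case using assms by (simp add: one_minus_pow_def)
next
  case (Suc j)
  have "one_minus_pow T j f \<in> pow_dom D T (Suc k)" for k
    using Suc by blast
  then have "one_minus_pow T j f \<in> pow_dom D T k" "T (one_minus_pow T j f) \<in> pow_dom D T k" for k
    using Suc by auto
  then show ?case
    unfolding one_minus_pow_Suc by (auto intro: pow_dom_diff)
qed

lemma log_partial_in_ell2:
  assumes "f \<in> (\<Inter>k. pow_dom D T k)"
  shows "log_partial T f K \<in> ell2"
proof (induction K)
  case 0
  then show ?case by (simp add: log_partial_def ell2_zero)
next
  case (Suc K)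
  have "one_minus_pow T (Suc K) f \<in> pow_dom D T 0"
    using one_minus_pow_in_pow_dom[OF assms] by blast
  then have "(\<lambda>n. (1 / of_nat (Suc K)) * one_minus_pow T (Suc K) f n) \<in> ell2"
    by (intro ell2_scale) simp
  with Suc show ?case
    unfolding log_partial_def by (simp add: ell2_add)
qed

lemma zero_in_log_dom: "(\<lambda>n. 0) \<in> log_dom D T"
proof -
  have "(\<lambda>n. 0) \<in> pow_dom D T k" for k
    by (induction k) (simp_all add: ell2_zero zero_in_D T_zero)
  moreover have "one_minus_pow T k (\<lambda>n. 0) = (\<lambda>n. 0)" for k
    by (induction k) (simp_all add: one_minus_pow_Suc T_zero, simp add: one_minus_pow_def)
  ultimately show ?thesis
    unfolding log_dom_def log_partial_def
    by (auto intro!: bexI[of _ "\<lambda>n. 0"] simp: l2norm_def ell2_zero)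
qed

lemma log_dom_stable_coeff_eq_0:
  assumes f: "f \<in> log_dom D T"
    and stable: "\<And>k. one_minus_pow T k f n\<^sub>0 = c"
  shows "c = 0"
proof (rule ccontr)
  assume "c \<noteq> 0"
  from f have f_pow: "f \<in> (\<Inter>k. pow_dom D T k)"
    unfolding log_dom_def by blast
  from f obtain g where g: "g \<in> ell2"
    and lim: "(\<lambda>K. l2norm (\<lambda>n. log_partial T f K n - g n)) \<longlonglongrightarrow> 0"
    unfolding log_dom_def by blast
  have coeff_le: "norm (log_partial T f K n\<^sub>0 - g n\<^sub>0) \<le> l2norm (\<lambda>n. log_partial T f K n - g n)" for K
    using norm_le_l2norm[OF ell2_diff[OF log_partial_in_ell2[OF f_pow] g]] by simp
  have "(\<lambda>K. log_partial T f K n\<^sub>0) \<longlonglongrightarrow> g n\<^sub>0"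
    by (rule LIM_zero_cancel, rule tendsto_norm_zero_cancel, rule Lim_null_comparison[OF _ lim])
      (simp add: coeff_le)
  moreover have "log_partial T f K n\<^sub>0 = c * harm K" for K
    by (simp add: log_partial_def stable harm_def sum_distrib_left divide_inverse mult.commute)
  ultimately have "(\<lambda>K. c * harm K) \<longlonglongrightarrow> c * (g n\<^sub>0 / c)"
    using \<open>c \<noteq> 0\<close> by simp
  then have "(harm :: nat \<Rightarrow> complex) \<longlonglongrightarrow> g n\<^sub>0 / c"
    using tendsto_mult_left_iff[OF \<open>c \<noteq> 0\<close>] by blast
  then show False
    using not_convergent_harm convergentI by blast
qed

end

interpretation ann: diff_preserving_operator ann_dom ann
proof
  fix f g :: seq
  show "ann (\<lambda>n. f n - g n) = (\<lambda>n. ann f n - ann g n)"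
    by (simp add: ann_def fun_eq_iff right_diff_distrib)
  assume "f \<in> ann_dom" "g \<in> ann_dom"
  then show "(\<lambda>n. f n - g n) \<in> ann_dom"
    unfolding ann_dom_def by (auto intro: ell2_diff summable_weighted_norm_diff)
qed (simp add: ann_dom_def ell2_zero)

interpretation cre: diff_preserving_operator cre_dom cre
proof
  fix f g :: seq
  show "cre (\<lambda>n. f n - g n) = (\<lambda>n. cre f n - cre g n)"
    by (simp add: cre_def fun_eq_iff right_diff_distrib)
  assume "f \<in> cre_dom" "g \<in> cre_dom"
  then show "(\<lambda>n. f n - g n) \<in> cre_dom"
    unfolding cre_dom_def by (auto intro: ell2_diff summable_weighted_norm_diff)
qed (simp add: cre_dom_def ell2_zero)

lemma one_minus_pow_ann_top_coeff:
  assumes "\<And>n. n > N \<Longrightarrow> f n = 0"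
  shows "one_minus_pow ann k f N = f N"
proof -
  have "(\<forall>n>N. one_minus_pow ann k f n = 0) \<and> one_minus_pow ann k f N = f N"
    by (induction k) (simp_all add: assms one_minus_pow_def one_minus_pow_Suc ann_def)
  then show ?thesis ..
qed

lemma one_minus_pow_cre_bottom_coeff:
  assumes "\<And>n. n < M \<Longrightarrow> f n = 0"
  shows "one_minus_pow cre k f M = f M"
proof -
  have "(\<forall>n<M. one_minus_pow cre k f n = 0) \<and> one_minus_pow cre k f M = f M"
    by (induction k) (auto simp: assms one_minus_pow_def one_minus_pow_Suc cre_def)
  then show ?thesis ..
qed

lemma log_dom_ann_fin_eq_0:
  assumes f: "f \<in> log_dom ann_dom ann" and "f \<in> ell2_fin"
  shows "f = (\<lambda>n. 0)"
proof (rule ccontr)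
  assume "f \<noteq> (\<lambda>n. 0)"
  define S where "S = {n. f n \<noteq> 0}"
  have "finite S" "S \<noteq> {}"
    using assms(2) \<open>f \<noteq> (\<lambda>n. 0)\<close> by (auto simp: S_def ell2_fin_def)
  then have "f (Max S) \<noteq> 0"
    using Max_in unfolding S_def by blast
  moreover have "f n = 0" if "n > Max S" for n
    using Max_ge[OF \<open>finite S\<close>, of n] that unfolding S_def by fastforce
  ultimately show False
    using ann.log_dom_stable_coeff_eq_0[OF f one_minus_pow_ann_top_coeff] by blast
qed

lemma log_dom_cre_eq_0:
  assumes f: "f \<in> log_dom cre_dom cre"
  shows "f = (\<lambda>n. 0)"
proof
  fix n
  show "f n = 0"
  proof (induction n rule: less_induct)
    case (less n)
    then show ?case
      using cre.log_dom_stable_coeff_eq_0[OF f one_minus_pow_cre_bottom_coeff] by blast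
  qed
qed

theorem mainTheorem3:
  shows "log_dom ann_dom ann \<inter> ell2_fin = {\<lambda>n. 0} \<and> log_dom cre_dom cre = {\<lambda>n. 0} \<and> phase_dom = {\<lambda>n. 0}"
proof -
  have "(\<lambda>n. 0) \<in> ell2_fin"
    by (simp add: ell2_fin_def)
  then have ann_fin: "log_dom ann_dom ann \<inter> ell2_fin = {\<lambda>n. 0}"
    using ann.zero_in_log_dom log_dom_ann_fin_eq_0 by blast
  have cre: "log_dom cre_dom cre = {\<lambda>n. 0}"
    using cre.zero_in_log_dom log_dom_cre_eq_0 by blast
  have "phase_dom = {\<lambda>n. 0}"
    unfolding phase_dom_def cre using ann.zero_in_log_dom by blast
  with ann_fin cre show ?thesis by blast
qed

end
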